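(* For all integers $a,b\ge0$ and all $M\in\mathcal M_2(a,b)$ we have $\psi(M)=-1$ if $a=0$ and $b\ge1$, and $\psi(M)=1$ otherwise.
   Context: $\mathcal M_2(a,b)$ is the set of $M\in\mathrm{GL}_2(\mathbb Z_2)$ such that the kernel of $M-I$ on $(\mathbb Q_2/\mathbb Z_2)^2$ is isomorphic to $\mathbb Z/2^a\mathbb Z\times\mathbb Z/2^{a+b}\mathbb Z$. $\psi$ is the unique non-trivial character $\mathrm{GL}_2(\mathbb Z/2\mathbb Z)\to\{\pm1\}$ (the sign character under an isomorphism with $S_3$), evaluated on $M$ via reduction modulo $2$. *)

theory Defs
  imports "HOL-Algebra.Algebra" "HOL-Combinatorics.Permutations"
begin

text \<open>2-adic integers, represented by their coherent sequences of canonical residues: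
  x n is the residue of x modulo 2^n, in [0, 2^n).\<close>
type_synonym z2 = "nat \<Rightarrow> int"

definition Z2 :: "z2 set" where
  "Z2 = {x. \<forall>n. 0 \<le> x n \<and> x n < 2^n \<and> x (Suc n) mod 2^n = x n}"

definition z2add :: "z2 \<Rightarrow> z2 \<Rightarrow> z2" where
  "z2add x y = (\<lambda>n. (x n + y n) mod 2^n)"

definition z2mul :: "z2 \<Rightarrow> z2 \<Rightarrow> z2" where
  "z2mul x y = (\<lambda>n. (x n * y n) mod 2^n)"

definition z2zero :: z2 where "z2zero = (\<lambda>n. 0)"
definition z2one :: z2 where "z2one = (\<lambda>n. 1 mod 2^n)"

text \<open>2x2 matrices over Z_2, written (m11, m12, m21, m22).\<close>
type_synonym mat2 = "z2 \<times> z2 \<times> z2 \<times> z2"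

definition mat2_in :: "mat2 \<Rightarrow> bool" where
  "mat2_in M = (case M of (a, b, c, d) \<Rightarrow> a \<in> Z2 \<and> b \<in> Z2 \<and> c \<in> Z2 \<and> d \<in> Z2)"

definition mat2_mul :: "mat2 \<Rightarrow> mat2 \<Rightarrow> mat2" where
  "mat2_mul M N = (case M of (a, b, c, d) \<Rightarrow> case N of (e, f, g, h) \<Rightarrow>
     (z2add (z2mul a e) (z2mul b g), z2add (z2mul a f) (z2mul b h),
      z2add (z2mul c e) (z2mul d g), z2add (z2mul c f) (z2mul d h)))"

definition mat2_id :: mat2 where "mat2_id = (z2one, z2zero, z2zero, z2one)"

definition GL2Z2 :: "mat2 set" where
  "GL2Z2 = {M. mat2_in M \<and> (\<exists>N. mat2_in N \<and> mat2_mul M N = mat2_id \<and> mat2_mul N M = mat2_id)}"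

text \<open>Q_2/Z_2, represented by the rationals in [0,1) with 2-power denominator; addition mod 1.\<close>
definition Q2Z2 :: "rat set" where
  "Q2Z2 = {q. 0 \<le> q \<and> q < 1 \<and> (\<exists>n::nat. (2::rat)^n * q \<in> \<int>)}"

definition den2 :: "rat \<Rightarrow> nat" where
  "den2 q = (LEAST n. (2::rat)^n * q \<in> \<int>)"

definition z2act :: "z2 \<Rightarrow> rat \<Rightarrow> rat" where
  "z2act x q = frac (of_int (x (den2 q)) * q)"

definition kerMI :: "mat2 \<Rightarrow> (rat \<times> rat) set" where
  "kerMI M = (case M of (a, b, c, d) \<Rightarrow>
     {(u, v). u \<in> Q2Z2 \<and> v \<in> Q2Z2 \<and>
        frac (z2act a u + z2act b v) = u \<and> frac (z2act c u + z2act d v) = v})"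

definition QZ2sq_group :: "(rat \<times> rat) set \<Rightarrow> (rat \<times> rat) monoid" where
  "QZ2sq_group K = \<lparr>carrier = K,
     monoid.mult = (\<lambda>x y. (frac (fst x + fst y), frac (snd x + snd y))),
     one = (0, 0)\<rparr>"

definition M2 :: "nat \<Rightarrow> nat \<Rightarrow> mat2 set" where
  "M2 a b = {M \<in> GL2Z2. QZ2sq_group (kerMI M) \<cong>
       DirProd (integer_mod_group (2^a)) (integer_mod_group (2^(a+b)))}"

text \<open>The sign character of GL_2(F_2) = S_3: sign of the permutation of the three
  nonzero vectors of F_2^2 induced by the reduction of M modulo 2.\<close>
definition F2nz :: "(int \<times> int) set" where
  "F2nz = {(1, 0), (0, 1), (1, 1)}"

definition psi :: "mat2 \<Rightarrow> int" where
  "psi M = (case M of (a, b, c, d) \<Rightarrow>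
     sign (\<lambda>v. if v \<in> F2nz
               then ((a 1 * fst v + b 1 * snd v) mod 2, (c 1 * fst v + d 1 * snd v) mod 2)
               else v))"

end

theory Submission
  imports Defs
begin

text \<open>Both sides of the claimed identity are read off the 2-torsion of K = ker(M - I). For
  K = Z/2^a \<times> Z/2^(a+b) the 2-torsion has 1, 2 or 4 elements, and exactly 2 precisely when
  a = 0 and b \<ge> 1. On the other hand the 2-torsion of (Q_2/Z_2)^2 is {0, 1/2}^2 = F_2^2, on which
  M acts through its reduction modulo 2, so the 2-torsion of K is the fixed space of
  M mod 2 in F_2^2. In GL_2(F_2) = S_3 the identity fixes all four vectors, the three
  transpositions fix a line (two vectors) and the two 3-cycles fix only 0; hence
  \<psi>(M) = -1 exactly when the 2-torsion of K has two elements.\<close>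

lemma Z2_mod_pow:
  assumes "x \<in> Z2" "m \<le> n"
  shows "x n mod 2^m = x m"
  using assms(2)
proof (induction n rule: dec_induct)
  case base
  then show ?case using assms(1) by (simp add: Z2_def)
next
  case (step n)
  have "(2::int)^m dvd 2^n" using step(1) by (simp add: le_imp_power_dvd)
  then have "x (Suc n) mod 2^m = x (Suc n) mod 2^n mod 2^m" by (simp add: mod_mod_cancel)
  then show ?case using assms(1) step by (simp add: Z2_def)
qed

lemma Z2_at_one: "x \<in> Z2 \<Longrightarrow> x 1 \<in> {0, 1}"
  by (auto simp: Z2_def dest: spec[of _ 1])

lemma pow2_mult_Ints_mono:
  assumes "(2::rat)^m * u \<in> \<int>" "m \<le> n"
  shows "(2::rat)^n * u \<in> \<int>"
proof -
  obtain k where "(2::rat)^m * u = of_int k" using assms(1) by (auto elim: Ints_cases)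
  moreover have "(2::rat)^n * u = 2^(n - m) * (2^m * u)"
    using assms(2) by (simp flip: power_add)
  ultimately show ?thesis by simp
qed

lemma den2_Ints:
  assumes "u \<in> Q2Z2"
  shows "(2::rat)^den2 u * u \<in> \<int>" and "(2::rat)^N * u \<in> \<int> \<Longrightarrow> den2 u \<le> N"
  using assms unfolding Q2Z2_def den2_def by (auto intro: LeastI_ex Least_le)

lemma z2act_eq_level:
  assumes x: "x \<in> Z2" and u: "u \<in> Q2Z2" and N: "(2::rat)^N * u \<in> \<int>"
  shows "z2act x u = frac (of_int (x N) * u)"
proof -
  let ?m = "den2 u"
  have eq: "x N = x ?m + 2^?m * (x N div 2^?m)"
    using Z2_mod_pow[OF x den2_Ints(2)[OF u N]] by (metis div_mult_mod_eq add.commute mult.commute)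
  have "(of_int (x N) :: rat) = of_int (x ?m) + 2^?m * of_int (x N div 2^?m)"
    using arg_cong[where f = "of_int :: int \<Rightarrow> rat", OF eq] by simp
  then have "of_int (x N) * u = of_int (x ?m) * u + of_int (x N div 2^?m) * ((2::rat)^?m * u)"
    by (simp add: algebra_simps)
  moreover have "of_int (x N div 2^?m) * ((2::rat)^?m * u) \<in> \<int>"
    using den2_Ints(1)[OF u] by simp
  ultimately show ?thesis by (simp add: z2act_def frac_add_int_right)
qed

lemma half_values_Q2Z2:
  assumes "u \<in> {0, 1/2}"
  shows "(2::rat)^1 * u \<in> \<int>" and "u \<in> Q2Z2"
proof -
  have "(2::rat)^1 * u \<in> {0, 1}" "0 \<le> u" "u < 1" using assms by auto
  then show "(2::rat)^1 * u \<in> \<int>" by auto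
  then show "u \<in> Q2Z2" using \<open>0 \<le> u\<close> \<open>u < 1\<close> unfolding Q2Z2_def by blast
qed

lemma z2act_half_values:
  assumes "x \<in> Z2" "u \<in> {0, 1/2}"
  shows "z2act x u = of_int (x 1) * u"
proof -
  have "z2act x u = frac (of_int (x 1) * u)"
    using z2act_eq_level[OF assms(1) half_values_Q2Z2(2,1)[OF assms(2)]] .
  then show ?thesis using Z2_at_one[OF assms(1)] assms(2) by (auto simp: frac_eq)
qed

lemma Q2Z2_frac_add:
  assumes "u \<in> Q2Z2" "v \<in> Q2Z2"
  shows "frac (u + v) \<in> Q2Z2"
proof -
  obtain m n where "(2::rat)^m * u \<in> \<int>" "(2::rat)^n * v \<in> \<int>"
    using assms by (auto simp: Q2Z2_def)
  then have "(2::rat)^max m n * u \<in> \<int>" "(2::rat)^max m n * v \<in> \<int>"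
    using pow2_mult_Ints_mono by auto
  then have "(2::rat)^max m n * frac (u + v) \<in> \<int>"
    unfolding frac_def by (simp add: algebra_simps)
  then show ?thesis unfolding Q2Z2_def using frac_lt_1 frac_ge_0 by blast
qed

lemma z2act_frac_add:
  assumes x: "x \<in> Z2" and u: "u \<in> Q2Z2" and v: "v \<in> Q2Z2"
  shows "z2act x (frac (u + v)) = frac (z2act x u + z2act x v)"
proof -
  obtain m n where "(2::rat)^m * u \<in> \<int>" "(2::rat)^n * v \<in> \<int>"
    using u v by (auto simp: Q2Z2_def)
  then have uN: "(2::rat)^max m n * u \<in> \<int>" and vN: "(2::rat)^max m n * v \<in> \<int>"
    using pow2_mult_Ints_mono by auto
  then have "(2::rat)^max m n * frac (u + v) \<in> \<int>"
    unfolding frac_def by (simp add: algebra_simps)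
  then have "z2act x (frac (u + v)) = frac (of_int (x (max m n)) * frac (u + v))"
    using z2act_eq_level[OF x Q2Z2_frac_add[OF u v]] by blast
  also have "\<dots> = frac (of_int (x (max m n)) * u + of_int (x (max m n)) * v
      + of_int (- x (max m n) * \<lfloor>u + v\<rfloor>))"
    unfolding frac_def[of "u + v"] by (simp add: algebra_simps)
  also have "\<dots> = frac (z2act x u + z2act x v)"
    using z2act_eq_level[OF x u uN] z2act_eq_level[OF x v vN]
    by (simp only: frac_add_of_int_right) simp
  finally show ?thesis .
qed

lemma frac_frac_add: "frac (frac x + frac y) = frac (x + y)"
  by simp

lemma kerMI_add_closed:
  assumes "mat2_in M" "w \<in> kerMI M" "w' \<in> kerMI M"
  shows "w \<otimes>\<^bsub>QZ2sq_group (kerMI M)\<^esub> w' \<in> kerMI M"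
proof -
  obtain p q r s where M: "M = (p, q, r, s)" by (cases M)
  have Z: "p \<in> Z2" "q \<in> Z2" "r \<in> Z2" "s \<in> Z2" using assms(1) M by (auto simp: mat2_in_def)
  obtain u v u' v' where w: "w = (u, v)" and w': "w' = (u', v')" by (cases w, cases w')
  have Q: "u \<in> Q2Z2" "v \<in> Q2Z2" "u' \<in> Q2Z2" "v' \<in> Q2Z2"
    and eqs: "frac (z2act p u + z2act q v) = u" "frac (z2act r u + z2act s v) = v"
      "frac (z2act p u' + z2act q v') = u'" "frac (z2act r u' + z2act s v') = v'"
    using assms(2,3) by (auto simp: M w w' kerMI_def)
  have row: "frac (z2act y (frac (u + u')) + z2act z (frac (v + v')))
      = frac (frac (z2act y u + z2act z v) + frac (z2act y u' + z2act z v'))"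
    if "y \<in> Z2" "z \<in> Z2" for y z
  proof -
    have "frac (z2act y (frac (u + u')) + z2act z (frac (v + v')))
        = frac (frac (z2act y u + z2act y u') + frac (z2act z v + z2act z v'))"
      using that Q by (simp only: z2act_frac_add)
    also have "\<dots> = frac ((z2act y u + z2act y u') + (z2act z v + z2act z v'))"
      by (rule frac_frac_add)
    also have "\<dots> = frac ((z2act y u + z2act z v) + (z2act y u' + z2act z v'))"
      by (simp only: ac_simps)
    finally show ?thesis by (simp only: frac_frac_add)
  qed
  have "frac (z2act p (frac (u + u')) + z2act q (frac (v + v'))) = frac (u + u')"
    "frac (z2act r (frac (u + u')) + z2act s (frac (v + v'))) = frac (v + v')"
    using row[OF Z(1,2)] row[OF Z(3,4)] eqs by simp_all
  moreover have "frac (u + u') \<in> Q2Z2" "frac (v + v') \<in> Q2Z2"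
    using Q Q2Z2_frac_add by auto
  moreover have "w \<otimes>\<^bsub>QZ2sq_group (kerMI M)\<^esub> w' = (frac (u + u'), frac (v + v'))"
    by (simp add: QZ2sq_group_def w w')
  ultimately show ?thesis unfolding M kerMI_def by simp
qed

text \<open>Homomorphisms of HOL-Algebra need not preserve the unit, and the kernel structure is not
  known to be a group; so elements of order dividing 2 are those whose square is idempotent, a
  notion transported by any isomorphism.\<close>

definition idempotents :: "('a, 'b) monoid_scheme \<Rightarrow> 'a set" where
  "idempotents G = {x \<in> carrier G. x \<otimes>\<^bsub>G\<^esub> x = x}"

definition two_torsion :: "('a, 'b) monoid_scheme \<Rightarrow> 'a set" where
  "two_torsion G = {x \<in> carrier G. x \<otimes>\<^bsub>G\<^esub> x \<in> idempotents G}"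

lemma iso_bij_betw_two_torsion:
  assumes "h \<in> iso G H"
    and closed: "\<And>x y. x \<in> carrier G \<Longrightarrow> y \<in> carrier G \<Longrightarrow> x \<otimes>\<^bsub>G\<^esub> y \<in> carrier G"
  shows "bij_betw h (two_torsion G) (two_torsion H)"
proof -
  have mult: "\<And>x y. x \<in> carrier G \<Longrightarrow> y \<in> carrier G \<Longrightarrow> h (x \<otimes>\<^bsub>G\<^esub> y) = h x \<otimes>\<^bsub>H\<^esub> h y"
    and bij: "bij_betw h (carrier G) (carrier H)"
    using assms(1) by (auto simp: iso_def hom_def)
  then have inj: "inj_on h (carrier G)" and onto: "h ` carrier G = carrier H"
    by (auto simp: bij_betw_def)
  have square_idem_iff: "x \<otimes>\<^bsub>G\<^esub> x \<in> idempotents G \<longleftrightarrow> h x \<otimes>\<^bsub>H\<^esub> h x \<in> idempotents H"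
    if x: "x \<in> carrier G" for x
  proof -
    define e where "e = x \<otimes>\<^bsub>G\<^esub> x"
    have e: "e \<in> carrier G" "e \<otimes>\<^bsub>G\<^esub> e \<in> carrier G" using closed x by (simp_all add: e_def)
    have "h x \<otimes>\<^bsub>H\<^esub> h x = h e" using mult x by (simp add: e_def)
    moreover have "e \<otimes>\<^bsub>G\<^esub> e = e \<longleftrightarrow> h e \<otimes>\<^bsub>H\<^esub> h e = h e"
      using inj_on_eq_iff[OF inj e(2,1)] mult e(1) by simp
    ultimately show ?thesis using e onto by (auto simp: idempotents_def e_def)
  qed
  have "h ` two_torsion G = two_torsion H"
  proof
    show "h ` two_torsion G \<subseteq> two_torsion H"
      using onto square_idem_iff by (auto simp: two_torsion_def)
    show "two_torsion H \<subseteq> h ` two_torsion G"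
    proof
      fix y assume y: "y \<in> two_torsion H"
      then obtain x where "x \<in> carrier G" "y = h x" using onto by (auto simp: two_torsion_def)
      then show "y \<in> h ` two_torsion G" using y square_idem_iff by (auto simp: two_torsion_def)
    qed
  qed
  moreover have "inj_on h (two_torsion G)"
    using inj by (rule inj_on_subset) (auto simp: two_torsion_def)
  ultimately show ?thesis by (simp add: bij_betw_def)
qed

lemma two_torsion_DirProd: "two_torsion (G \<times>\<times> H) = two_torsion G \<times> two_torsion H"
  by (auto simp: two_torsion_def idempotents_def)

lemma card_two_torsion_integer_mod_group:
  assumes "n > 0"
  shows "card (two_torsion (integer_mod_group n)) = (if even n then 2 else 1)"
proof -
  have carrier: "carrier (integer_mod_group n) = {0..<int n}"
    and mult: "\<And>x y. x \<otimes>\<^bsub>integer_mod_group n\<^esub> y = (x + y) mod int n"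
    using assms by (simp_all add: integer_mod_group_def)
  have "y = 0" if "y \<in> {0..<int n}" "(y + y) mod int n = y" for y
  proof -
    have "(y + y) mod int n = y mod int n" using that by simp
    then have "int n dvd y" by (simp add: mod_eq_dvd_iff)
    then show ?thesis using that(1) zdvd_imp_le[of "int n" y] by fastforce
  qed
  then have "idempotents (integer_mod_group n) = {0}"
    using assms by (auto simp: idempotents_def carrier mult)
  then have "two_torsion (integer_mod_group n) = {x \<in> {0..<int n}. int n dvd 2 * x}"
    using assms by (auto simp: two_torsion_def carrier mult dvd_eq_mod_eq_0)
  also have "\<dots> = {x \<in> {0..<int n}. x = 0 \<or> 2 * x = int n}"
  proof (intro Collect_cong conj_cong refl iffI)
    fix x assume x: "x \<in> {0..<int n}" and "int n dvd 2 * x"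
    then obtain k where k: "2 * x = int n * k" by blast
    have "0 \<le> x" "x < int n" using x by auto
    then have "0 \<le> int n * k" "int n * k < int n * 2" using k by linarith+
    then have "0 \<le> k" "k < 2" using assms by (simp_all add: zero_le_mult_iff)
    then show "x = 0 \<or> 2 * x = int n" using k by (cases "k = 0") auto
  qed auto
  also have "\<dots> = (if even n then {0, int n div 2} else {0})"
    using assms by (auto elim!: evenE) (metis dvd_triv_left even_of_nat)
  finally show ?thesis using assms by auto
qed

lemma frac_double_eq_self_iff: "frac (2 * x) = x \<longleftrightarrow> x = 0"
proof
  assume "frac (2 * x) = x"
  then have "x = of_int \<lfloor>2 * x\<rfloor>" by (simp add: frac_def)
  then have "x \<in> \<int>" by (metis Ints_of_int)
  then show "x = 0" using \<open>frac (2 * x) = x\<close> by (metis Ints_mult Ints_numeral frac_eq_0_iff)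
qed simp

lemma frac_double_eq_0_iff:
  fixes w :: "'a :: floor_ceiling"
  assumes "0 \<le> w" "w < 1"
  shows "frac (2 * w) = 0 \<longleftrightarrow> w \<in> {0, 1/2}"
proof
  assume "frac (2 * w) = 0"
  then obtain n where n: "2 * w = of_int n" by (auto simp: frac_eq_0_iff elim: Ints_cases)
  then have "0 \<le> (of_int n :: 'a)" "(of_int n :: 'a) < 2" using assms by linarith+
  then have "0 \<le> n" "n < 2" by simp_all
  then have "n = 0 \<or> n = 1" by auto
  then show "w \<in> {0, 1/2}" using n by auto
next
  assume "w \<in> {0, 1/2}"
  then have "2 * w \<in> {0, 1}" by auto
  then show "frac (2 * w) = 0" by auto
qed

lemma two_torsion_QZ2sq_group:
  assumes "(0, 0) \<in> K" "K \<subseteq> Q2Z2 \<times> Q2Z2"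
  shows "two_torsion (QZ2sq_group K) = {(u, v) \<in> K. u \<in> {0, 1/2} \<and> v \<in> {0, 1/2}}"
proof -
  have "idempotents (QZ2sq_group K) = {(0, 0)}"
    using assms(1) by (auto simp: idempotents_def QZ2sq_group_def frac_double_eq_self_iff)
  then have "two_torsion (QZ2sq_group K) = {(u, v) \<in> K. frac (2 * u) = 0 \<and> frac (2 * v) = 0}"
    by (auto simp: two_torsion_def QZ2sq_group_def)
  also have "\<dots> = {(u, v) \<in> K. u \<in> {0, 1/2} \<and> v \<in> {0, 1/2}}"
    using assms(2) frac_double_eq_0_iff by (fastforce simp: Q2Z2_def)
  finally show ?thesis .
qed

text \<open>With {0, 1/2}^2 read as F_2^2, the fixed space of the matrix (P Q; R S) over F_2.\<close>

definition half_fixed_points :: "int \<Rightarrow> int \<Rightarrow> int \<Rightarrow> int \<Rightarrow> (rat \<times> rat) set" where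
  "half_fixed_points P Q R S = {(u, v). u \<in> {0, 1/2} \<and> v \<in> {0, 1/2} \<and>
     frac (of_int P * u + of_int Q * v) = u \<and> frac (of_int R * u + of_int S * v) = v}"

lemma kerMI_two_torsion:
  assumes "mat2_in (p, q, r, s)"
  shows "{(u, v) \<in> kerMI (p, q, r, s). u \<in> {0, 1/2} \<and> v \<in> {0, 1/2}}
    = half_fixed_points (p 1) (q 1) (r 1) (s 1)"
  using assms half_values_Q2Z2(2) z2act_half_values
  by (auto simp: mat2_in_def kerMI_def half_fixed_points_def)

lemma z2add_z2mul_at_one: "z2add (z2mul w x) (z2mul y z) 1 = (w 1 * x 1 + y 1 * z 1) mod 2"
  by (simp add: z2add_def z2mul_def mod_add_eq)

lemma GL2Z2_det_odd:
  assumes "(p, q, r, s) \<in> GL2Z2"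
  shows "odd (p 1 * s 1 - q 1 * r 1)"
proof -
  obtain e f g k where "mat2_mul (p, q, r, s) (e, f, g, k) = mat2_id"
    using assms by (auto simp: GL2Z2_def)
  then have "z2add (z2mul p e) (z2mul q g) = z2one" "z2add (z2mul p f) (z2mul q k) = z2zero"
    "z2add (z2mul r f) (z2mul s k) = z2one"
    by (simp_all add: mat2_mul_def mat2_id_def)
  from this[THEN fun_cong[of _ _ 1], unfolded z2add_z2mul_at_one]
  have "odd (p 1 * e 1 + q 1 * g 1)" "even (p 1 * f 1 + q 1 * k 1)" "odd (r 1 * f 1 + s 1 * k 1)"
    by (simp_all add: z2one_def z2zero_def odd_iff_mod_2_eq_one even_iff_mod_2_eq_zero)
  then have "odd ((p 1 * e 1 + q 1 * g 1) * (r 1 * f 1 + s 1 * k 1)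
      - (p 1 * f 1 + q 1 * k 1) * (r 1 * e 1 + s 1 * g 1))"
    by simp
  moreover have "(p 1 * e 1 + q 1 * g 1) * (r 1 * f 1 + s 1 * k 1)
      - (p 1 * f 1 + q 1 * k 1) * (r 1 * e 1 + s 1 * g 1)
      = (p 1 * s 1 - q 1 * r 1) * (e 1 * k 1 - f 1 * g 1)"
    by (simp add: algebra_simps)
  ultimately show ?thesis by (metis even_mult_iff)
qed

definition F2_perm :: "int \<Rightarrow> int \<Rightarrow> int \<Rightarrow> int \<Rightarrow> int \<times> int \<Rightarrow> int \<times> int" where
  "F2_perm P Q R S = (\<lambda>v. if v \<in> F2nz
     then ((P * fst v + Q * snd v) mod 2, (R * fst v + S * snd v) mod 2) else v)"

lemma half_fixed_points_enum:
  "half_fixed_points P Q R S = {w \<in> {(0, 0), (0, 1/2), (1/2, 0), (1/2, 1/2)}.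
     frac (of_int P * fst w + of_int Q * snd w) = fst w \<and>
     frac (of_int R * fst w + of_int S * snd w) = snd w}"
  unfolding half_fixed_points_def by auto

lemma frac_half [simp]: "frac (1/2 :: rat) = 1/2"
  by (simp add: frac_eq)

lemma sign_F2_perm:
  assumes "P \<in> {0, 1}" "Q \<in> {0, 1}" "R \<in> {0, 1}" "S \<in> {0, 1}" "odd (P * S - Q * R)"
  shows "sign (F2_perm P Q R S) = (if card (half_fixed_points P Q R S) = 2 then -1 else 1)"
proof -
  let ?\<tau> = "Transposition.transpose :: int \<times> int \<Rightarrow> _"
  have [simp]: "sign (?\<tau> x y) = -1" "permutation (?\<tau> x y)" if "x \<noteq> y" for x y
    using that by (simp_all add: sign_swap_id permutation_swap_id)
  consider "(P, Q, R, S) = (1, 0, 0, 1)" | "(P, Q, R, S) = (0, 1, 1, 0)"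
    | "(P, Q, R, S) = (1, 1, 0, 1)" | "(P, Q, R, S) = (1, 0, 1, 1)"
    | "(P, Q, R, S) = (0, 1, 1, 1)" | "(P, Q, R, S) = (1, 1, 1, 0)"
    using assms by auto
  then show ?thesis
  proof cases
    case 1
    then have "F2_perm P Q R S = id" by (auto simp: F2_perm_def F2nz_def)
    moreover have "half_fixed_points P Q R S = {(0, 0), (0, 1/2), (1/2, 0), (1/2, 1/2)}"
      using 1 unfolding half_fixed_points_enum by auto
    ultimately show ?thesis by simp
  next
    case 2
    then have "F2_perm P Q R S = ?\<tau> (1, 0) (0, 1)"
      by (auto simp: F2_perm_def F2nz_def transpose_def)
    moreover have "half_fixed_points P Q R S = {(0, 0), (1/2, 1/2)}"
      using 2 unfolding half_fixed_points_enum by auto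
    ultimately show ?thesis by simp
  next
    case 3
    then have "F2_perm P Q R S = ?\<tau> (0, 1) (1, 1)"
      by (auto simp: F2_perm_def F2nz_def transpose_def)
    moreover have "half_fixed_points P Q R S = {(0, 0), (1/2, 0)}"
      using 3 unfolding half_fixed_points_enum by auto
    ultimately show ?thesis by simp
  next
    case 4
    then have "F2_perm P Q R S = ?\<tau> (1, 0) (1, 1)"
      by (auto simp: F2_perm_def F2nz_def transpose_def)
    moreover have "half_fixed_points P Q R S = {(0, 0), (0, 1/2)}"
      using 4 unfolding half_fixed_points_enum by auto
    ultimately show ?thesis by simp
  next
    case 5
    then have "F2_perm P Q R S = ?\<tau> (1, 0) (0, 1) \<circ> ?\<tau> (0, 1) (1, 1)"
      by (auto simp: F2_perm_def F2nz_def transpose_def)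
    moreover have "half_fixed_points P Q R S = {(0, 0)}"
      using 5 unfolding half_fixed_points_enum by auto
    ultimately show ?thesis by (simp add: sign_compose)
  next
    case 6
    then have "F2_perm P Q R S = ?\<tau> (0, 1) (1, 1) \<circ> ?\<tau> (1, 0) (0, 1)"
      by (auto simp: F2_perm_def F2nz_def transpose_def)
    moreover have "half_fixed_points P Q R S = {(0, 0)}"
      using 6 unfolding half_fixed_points_enum by auto
    ultimately show ?thesis by (simp add: sign_compose)
  qed
qed

lemma carrier_QZ2sq_group [simp]: "carrier (QZ2sq_group K) = K"
  by (simp add: QZ2sq_group_def)

lemma zero_in_kerMI: "(0, 0) \<in> kerMI M"
  by (cases M) (auto simp: kerMI_def z2act_def Q2Z2_def)

lemma kerMI_subset: "kerMI M \<subseteq> Q2Z2 \<times> Q2Z2"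
  by (cases M) (auto simp: kerMI_def)

theorem lemma6p3:
  fixes a b :: nat and M :: mat2
  assumes "M \<in> M2 a b"
  shows "psi M = (if a = 0 \<and> b \<ge> 1 then -1 else 1)"
proof -
  obtain p q r s where M: "M = (p, q, r, s)" by (cases M)
  have GL: "M \<in> GL2Z2" using assms by (simp add: M2_def)
  then have Z: "p \<in> Z2" "q \<in> Z2" "r \<in> Z2" "s \<in> Z2" and "mat2_in M"
    by (auto simp: GL2Z2_def mat2_in_def M)
  obtain h where h: "h \<in> iso (QZ2sq_group (kerMI M))
      (integer_mod_group (2^a) \<times>\<times> integer_mod_group (2^(a+b)))"
    using assms by (auto simp: M2_def is_iso_def)
  define c :: "nat \<Rightarrow> nat" where "c k = (if k = 0 then 1 else 2)" for k
  have "card (two_torsion (QZ2sq_group (kerMI M))) = c a * c (a + b)"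
    using bij_betw_same_card[OF iso_bij_betw_two_torsion[OF h]] kerMI_add_closed[OF \<open>mat2_in M\<close>]
    by (simp add: two_torsion_DirProd card_cartesian_product card_two_torsion_integer_mod_group c_def)
  moreover have "two_torsion (QZ2sq_group (kerMI M)) = half_fixed_points (p 1) (q 1) (r 1) (s 1)"
    using two_torsion_QZ2sq_group[OF zero_in_kerMI kerMI_subset] kerMI_two_torsion \<open>mat2_in M\<close>
    by (simp add: M)
  moreover have "psi M = sign (F2_perm (p 1) (q 1) (r 1) (s 1))"
    unfolding psi_def F2_perm_def M by simp
  moreover have "sign (F2_perm (p 1) (q 1) (r 1) (s 1))
      = (if card (half_fixed_points (p 1) (q 1) (r 1) (s 1)) = 2 then -1 else 1)"
    using GL2Z2_det_odd GL Z2_at_one Z unfolding M by (intro sign_F2_perm) auto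
  ultimately show ?thesis by (simp add: c_def)
qed

end
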